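(* For every integer $k \geq 3$ and every $\varepsilon > 0$ there exist $\gamma_0 > 0$ and $\rho > 0$ such that for all $0 < \mu \leq \gamma \leq \gamma_0$ there exists $n_0$ such that for all $n \geq n_0$ the following holds. Let $H$ be an $n$-vertex $k$-graph with $\delta_{k-1}(H) \geq (1/3 + \varepsilon) n$, and let $G$ be its $\gamma$-diamond graph. Suppose $G$ has a $\mu$-separation $\{A, B\}$. Then $H$ contains at least $\rho n^{k+2}$ distinct proto-balancers (with respect to the partition $\{A,B\}$).
   Context: $\delta_{k-1}(H)$ is the minimum over $(k-1)$-subsets of $V(H)$ of the number of edges containing it. For $x,y \in V(H)$, an $(x,y)$-diamond is a pair of edges $e,f$ of $H$ with $|e\cap f| = k-1$, $x \in e \setminus f$, $y \in f\setminus e$. The $\gamma$-diamond graph $G$ of $H$ has vertex set $V(H)$ and $xy \in E(G)$ iff $H$ has at least $\gamma\binom{n}{k-1}$ distinct $(x,y)$-diamonds. A partition $\{A,B\}$ of $V(G)$ into nonempty parts is a $\mu$-separation if $G$ has fewer than $\mu|A||B|$ edges between $A$ and $B$. An $(A,B)$-proto-balancer in $H$ is given by a $(k-3)$-set $S$ and three $3$-sets $X_1,X_2,X_3 \subseteq V(H)\setminus S$ with: $S \cup X_i \in E(H)$ for $i \in [3]$; $|X_1\cap A| = |X_2 \cap A| = |X_1\cap X_2| = |X_1\cap X_2\cap A| = 2$; $|X_3\cap A| = 0$; $|X_1\cap X_3| = |X_2\cap X_3| = 1$ (it is the subgraph with edges $S\cup X_1,S\cup X_2,S\cup X_3$, on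 $k+2$ vertices). A $(B,A)$-proto-balancer is the same with $A$ and $B$ exchanged; a proto-balancer is either of these. *)

theory Defs
  imports Complex_Main
begin

definition kgraph :: "nat \<Rightarrow> 'a set \<Rightarrow> 'a set set \<Rightarrow> bool" where
  "kgraph k V E \<longleftrightarrow> finite V \<and> (\<forall>e\<in>E. e \<subseteq> V \<and> card e = k)"

definition min_codegree :: "nat \<Rightarrow> 'a set \<Rightarrow> 'a set set \<Rightarrow> nat" where
  "min_codegree k V E = Min {card {e\<in>E. S \<subseteq> e} | S. S \<subseteq> V \<and> card S = k - 1}"

definition diamonds :: "nat \<Rightarrow> 'a set set \<Rightarrow> 'a \<Rightarrow> 'a \<Rightarrow> ('a set \<times> 'a set) set" where
  "diamonds k E x y = {(e, f). e \<in> E \<and> f \<in> E \<and> card (e \<inter> f) = k - 1 \<and> x \<in> e - f \<and> y \<in> f - e}"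

definition diamond_adj :: "nat \<Rightarrow> real \<Rightarrow> 'a set \<Rightarrow> 'a set set \<Rightarrow> 'a \<Rightarrow> 'a \<Rightarrow> bool" where
  "diamond_adj k \<gamma> V E x y \<longleftrightarrow> x \<in> V \<and> y \<in> V \<and> x \<noteq> y \<and>
     real (card (diamonds k E x y)) \<ge> \<gamma> * real (card V choose (k - 1))"

definition mu_separation :: "nat \<Rightarrow> real \<Rightarrow> real \<Rightarrow> 'a set \<Rightarrow> 'a set set \<Rightarrow> 'a set \<Rightarrow> 'a set \<Rightarrow> bool" where
  "mu_separation k \<gamma> \<mu> V E A B \<longleftrightarrow>
     A \<noteq> {} \<and> B \<noteq> {} \<and> A \<inter> B = {} \<and> A \<union> B = V \<and>
     real (card {(a, b). a \<in> A \<and> b \<in> B \<and> diamond_adj k \<gamma> V E a b})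
       < \<mu> * real (card A) * real (card B)"

definition is_proto_balancer ::
  "nat \<Rightarrow> 'a set \<Rightarrow> 'a set set \<Rightarrow> 'a set \<Rightarrow> 'a set \<Rightarrow> 'a set \<Rightarrow> 'a set \<Rightarrow> 'a set \<Rightarrow> bool" where
  "is_proto_balancer k V E A S X1 X2 X3 \<longleftrightarrow>
     S \<subseteq> V \<and> card S = k - 3 \<and>
     X1 \<subseteq> V - S \<and> X2 \<subseteq> V - S \<and> X3 \<subseteq> V - S \<and>
     card X1 = 3 \<and> card X2 = 3 \<and> card X3 = 3 \<and>
     S \<union> X1 \<in> E \<and> S \<union> X2 \<in> E \<and> S \<union> X3 \<in> E \<and>
     card (X1 \<inter> A) = 2 \<and> card (X2 \<inter> A) = 2 \<and> card (X1 \<inter> X2) = 2 \<and> card (X1 \<inter> X2 \<inter> A) = 2 \<and>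
     card (X3 \<inter> A) = 0 \<and> card (X1 \<inter> X3) = 1 \<and> card (X2 \<inter> X3) = 1"

definition proto_balancers :: "nat \<Rightarrow> 'a set \<Rightarrow> 'a set set \<Rightarrow> 'a set \<Rightarrow> 'a set set set" where
  "proto_balancers k V E A =
     {{S \<union> X1, S \<union> X2, S \<union> X3} | S X1 X2 X3. is_proto_balancer k V E A S X1 X2 X3}"

end

theory Submission
  imports Defs "HOL-Library.Ramsey"
begin

(*
  Write n for the number of vertices and delta for the minimum codegree. A (k-1)-set T with
  neighbours u in A and w in B yields the (u,w)-diamond (T + u, T + w). Since few pairs of A x B
  are adjacent in the diamond graph, there are only O(gamma n^(k+1)) such cross neighbours, and as
  delta > n/3 this forces both parts to have more than n/6 vertices.

  The proto-balancers come from configurations (S, a, b, c, x, y, z, v): S is a (k-3)-set, a in A,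
  b in B, c is a neighbour of S + a + b, d is the one of a, b on the side of c, x and y are distinct
  neighbours of S + d + c, z is a neighbour of S + x + y, and v lies in two of the neighbourhoods of
  S + x + d, S + x + y, S + x + z (there are at least (3 delta - n)/2 such v). There are
  Omega(eps n^(k+4)) configurations. If x, y, z all lie on the side opposite to c, the edges
  S + d + c + x, S + d + c + y, S + x + y + z form a proto-balancer, and each proto-balancer arises
  from O(n^2) configurations. Otherwise some (k-1)-set of the configuration has neighbours on both
  sides, so the configuration is a rearrangement of such a cross neighbour and three more vertices,
  and there are only O(gamma n^(k+4)) of those. For gamma small compared with eps this leaves
  Omega(n^(k+2)) proto-balancers.
*)

lemma card_le_mult_card_image:
  assumes "finite X" and "\<And>y. y \<in> f ` X \<Longrightarrow> card {x \<in> X. f x = y} \<le> K"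
  shows "card X \<le> K * card (f ` X)"
proof -
  have "card X = card (\<Union>y\<in>f ` X. {x \<in> X. f x = y})"
    by (rule arg_cong[where f = card]) auto
  also have "\<dots> = (\<Sum>y\<in>f ` X. card {x \<in> X. f x = y})"
    by (rule card_UN_disjoint) (use assms(1) in auto)
  also have "\<dots> \<le> (\<Sum>y\<in>f ` X. K)"
    by (rule sum_mono) (rule assms(2))
  finally show ?thesis by (simp add: mult.commute)
qed

lemma card_Sigma_ge:
  assumes "finite X" and "\<And>x. x \<in> X \<Longrightarrow> finite (Y x)"
    and "r0 \<le> real (card X)" and "\<And>x. x \<in> X \<Longrightarrow> r \<le> real (card (Y x))"
    and "0 \<le> r0" and "0 \<le> r"
  shows "r0 * r \<le> real (card (Sigma X Y))"
proof -
  have "r0 * r \<le> real (card X) * r"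
    using assms(3,6) by (rule mult_right_mono)
  also have "\<dots> = (\<Sum>x\<in>X. r)" by simp
  also have "\<dots> \<le> (\<Sum>x\<in>X. real (card (Y x)))"
    by (rule sum_mono) (rule assms(4))
  also have "\<dots> = real (card (Sigma X Y))"
    using assms(1,2) by simp
  finally show ?thesis .
qed

definition covered_twice :: "'a set \<Rightarrow> 'a set \<Rightarrow> 'a set \<Rightarrow> 'a set" where
  "covered_twice X Y Z = X \<inter> Y \<union> X \<inter> Z \<union> Y \<inter> Z"

lemma card_covered_twice_ge:
  assumes "finite U" and "X \<subseteq> U" "Y \<subseteq> U" "Z \<subseteq> U"
  shows "card X + card Y + card Z \<le> card U + 2 * card (covered_twice X Y Z)"
proof -
  have fin: "finite X" "finite Y" "finite Z"
    using assms by (meson finite_subset)+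
  have "finite (covered_twice X Y Z)"
    unfolding covered_twice_def using fin by simp
  then have "card (X \<inter> Y) \<le> card (covered_twice X Y Z)"
    and "card ((X \<union> Y) \<inter> Z) \<le> card (covered_twice X Y Z)"
    by (auto simp: covered_twice_def intro!: card_mono)
  moreover have "card (X \<union> Y \<union> Z) \<le> card U"
    using assms by (intro card_mono) auto
  moreover have "card X + card Y = card (X \<union> Y) + card (X \<inter> Y)"
    and "card (X \<union> Y) + card Z = card (X \<union> Y \<union> Z) + card ((X \<union> Y) \<inter> Z)"
    using fin by (simp_all add: card_Un_Int[symmetric])
  ultimately show ?thesis by linarith
qed

lemma binomial_add2_le: "n choose (j + 2) \<le> n ^ 2 * (n choose j)"
proof -
  have Suc_le: "n choose Suc i \<le> n * (n choose i)" for i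
  proof -
    have "n choose Suc i \<le> Suc i * (n choose Suc i)"
      by simp
    also have "\<dots> = n * ((n - 1) choose i)"
      by (rule binomial_absorption)
    also have "\<dots> \<le> n * (n choose i)"
      by (simp add: binomial_right_mono)
    finally show ?thesis .
  qed
  have "n choose (j + 2) \<le> n * (n choose Suc j)"
    using Suc_le[of "Suc j"] by simp
  also have "\<dots> \<le> n * (n * (n choose j))"
    using Suc_le[of j] by simp
  finally show ?thesis
    by (simp add: power2_eq_square)
qed

section \<open>Neighbourhoods and diamonds\<close>

lemma kgraph_finite: "kgraph k V E \<Longrightarrow> finite V"
  unfolding kgraph_def by simp

definition nbhd :: "'a set \<Rightarrow> 'a set set \<Rightarrow> 'a set \<Rightarrow> 'a set" where
  "nbhd V E T = {v \<in> V - T. insert v T \<in> E}"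

lemma finite_nbhd: "finite V \<Longrightarrow> finite (nbhd V E T)"
  unfolding nbhd_def by simp

lemma kgraph_edge_eq_insert:
  assumes "kgraph k V E" and "e \<in> E" and "T \<subseteq> e" and "card T = k - 1" and "v \<in> e - T" and "1 \<le> k"
  shows "e = insert v T"
proof -
  have "finite e" "card e = k"
    using assms(1,2) unfolding kgraph_def by (auto intro: finite_subset)
  moreover have "finite T"
    using \<open>finite e\<close> assms(3) finite_subset by blast
  ultimately show ?thesis
    using assms(3-6) by (intro card_subset_eq[symmetric]) auto
qed

lemma min_codegree_le_card_nbhd:
  assumes kg: "kgraph k V E" and "1 \<le> k" and T: "T \<in> nsets V (k - 1)"
  shows "min_codegree k V E \<le> card (nbhd V E T)"
proof -
  have fin: "finite V"
    using kg by (rule kgraph_finite)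
  have "nsets V (k - 1) = {S. S \<subseteq> V \<and> card S = k - 1}"
    using fin by (auto simp: nsets_def intro: rev_finite_subset)
  then have "{card {e \<in> E. S \<subseteq> e} | S. S \<subseteq> V \<and> card S = k - 1}
      = (\<lambda>S. card {e \<in> E. S \<subseteq> e}) ` nsets V (k - 1)"
    by blast
  then have "min_codegree k V E \<le> card {e \<in> E. T \<subseteq> e}"
    unfolding min_codegree_def using fin T by (simp add: finite_imp_finite_nsets)
  also have "\<dots> \<le> card ((\<lambda>v. insert v T) ` nbhd V E T)"
  proof (rule card_mono)
    show "finite ((\<lambda>v. insert v T) ` nbhd V E T)"
      using fin by (simp add: finite_nbhd)
    show "{e \<in> E. T \<subseteq> e} \<subseteq> (\<lambda>v. insert v T) ` nbhd V E T"
    proof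
      fix e assume e: "e \<in> {e \<in> E. T \<subseteq> e}"
      have "card e = k" "e \<subseteq> V"
        using e kg unfolding kgraph_def by auto
      moreover have "card T = k - 1"
        using T by (simp add: nsets_def)
      ultimately have "T \<noteq> e"
        using \<open>1 \<le> k\<close> by auto
      then obtain v where "v \<in> e - T"
        using e by blast
      moreover have "e = insert v T"
        using kgraph_edge_eq_insert[OF kg _ _ \<open>card T = k - 1\<close> \<open>v \<in> e - T\<close> \<open>1 \<le> k\<close>] e by simp
      ultimately have "v \<in> nbhd V E T"
        using e \<open>e \<subseteq> V\<close> unfolding nbhd_def by auto
      then show "e \<in> (\<lambda>v. insert v T) ` nbhd V E T"
        using \<open>e = insert v T\<close> by (rule rev_image_eqI)
    qed
  qed
  also have "\<dots> \<le> card (nbhd V E T)"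
    by (rule card_image_le) (simp add: fin finite_nbhd)
  finally show ?thesis .
qed

lemma kgraph_finite_edges: "kgraph k V E \<Longrightarrow> finite E"
  unfolding kgraph_def by (meson PowI finite_Pow_iff finite_subset subsetI)

lemma finite_diamonds: "kgraph k V E \<Longrightarrow> finite (diamonds k E x y)"
  by (rule finite_subset[of _ "E \<times> E"]) (auto simp: diamonds_def kgraph_finite_edges)

lemma card_diamonds_le:
  assumes kg: "kgraph k V E" and "1 \<le> k"
  shows "card (diamonds k E x y) \<le> card V choose (k - 1)"
proof -
  have fin: "finite V"
    using kg by (rule kgraph_finite)
  have shape: "e = insert x (e \<inter> f) \<and> f = insert y (e \<inter> f)" if "(e, f) \<in> diamonds k E x y" for e f
    using that kgraph_edge_eq_insert[OF kg, of e "e \<inter> f" x] kgraph_edge_eq_insert[OF kg, of f "e \<inter> f" y]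
      \<open>1 \<le> k\<close>
    unfolding diamonds_def by auto
  have "inj_on (\<lambda>(e, f). e \<inter> f) (diamonds k E x y)"
    by (rule inj_onI) (metis (no_types, lifting) case_prod_beta prod.collapse shape)
  moreover have "(\<lambda>(e, f). e \<inter> f) ` diamonds k E x y \<subseteq> nsets V (k - 1)"
    using kg fin unfolding diamonds_def kgraph_def nsets_def by (auto intro: rev_finite_subset)
  ultimately have "card (diamonds k E x y) \<le> card (nsets V (k - 1))"
    using fin by (metis card_image card_mono finite_imp_finite_nsets)
  then show ?thesis by simp
qed

definition cross_nbrs :: "'a set \<Rightarrow> 'a set set \<Rightarrow> 'a set \<Rightarrow> 'a set \<Rightarrow> nat \<Rightarrow> ('a set \<times> 'a \<times> 'a) set" where
  "cross_nbrs V E A B j = (SIGMA T:nsets V j. (A \<inter> nbhd V E T) \<times> (B \<inter> nbhd V E T))"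

definition part_nbrs :: "'a set \<Rightarrow> 'a set set \<Rightarrow> 'a set \<Rightarrow> nat \<Rightarrow> ('a set \<times> 'a) set" where
  "part_nbrs V E A j = (SIGMA T:nsets V j. A \<inter> nbhd V E T)"

lemma finite_cross_nbrs: "finite V \<Longrightarrow> finite (cross_nbrs V E A B j)"
  unfolding cross_nbrs_def by (simp add: finite_imp_finite_nsets finite_nbhd)

lemma card_cross_nbrs_swap: "card (cross_nbrs V E B A j) = card (cross_nbrs V E A B j)"
proof -
  have "cross_nbrs V E B A j = (\<lambda>(T, u, w). (T, w, u)) ` cross_nbrs V E A B j"
    unfolding cross_nbrs_def by force
  moreover have "inj_on (\<lambda>(T, u, w). (T, w, u)) (cross_nbrs V E A B j)"
    by (auto simp: inj_on_def)
  ultimately show ?thesis by (simp add: card_image)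
qed

lemma card_cross_nbrs_le_sum_diamonds:
  assumes kg: "kgraph k V E" and "1 \<le> k" and "A \<inter> B = {}" and "A \<subseteq> V" "B \<subseteq> V"
  shows "card (cross_nbrs V E A B (k - 1)) \<le> (\<Sum>(a, b)\<in>A \<times> B. card (diamonds k E a b))"
proof -
  have fin: "finite A" "finite B"
    using kg assms(4,5) unfolding kgraph_def by (auto intro: finite_subset)
  define to_diamond where "to_diamond = (\<lambda>(T :: 'a set, u, w). ((u, w), (insert u T, insert w T)))"
  have "(\<lambda>((u, w), (e, f)). (e \<inter> f, u, w)) (to_diamond t) = t" if "t \<in> cross_nbrs V E A B (k - 1)" for t
    using that \<open>A \<inter> B = {}\<close> unfolding cross_nbrs_def nbhd_def to_diamond_def by auto
  then have "inj_on to_diamond (cross_nbrs V E A B (k - 1))"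
    by (rule inj_on_inverseI)
  moreover have "to_diamond ` cross_nbrs V E A B (k - 1) \<subseteq> (SIGMA (a, b):A \<times> B. diamonds k E a b)"
  proof (rule image_subsetI)
    fix t assume t: "t \<in> cross_nbrs V E A B (k - 1)"
    obtain T u w where t_eq: "t = (T, u, w)"
      by (rule prod_cases3)
    have "T \<in> nsets V (k - 1)" "u \<in> A" "w \<in> B" "u \<notin> T" "w \<notin> T"
      "insert u T \<in> E" "insert w T \<in> E"
      using t unfolding t_eq cross_nbrs_def nbhd_def by auto
    moreover have "u \<noteq> w"
      using \<open>u \<in> A\<close> \<open>w \<in> B\<close> \<open>A \<inter> B = {}\<close> by auto
    ultimately show "to_diamond t \<in> (SIGMA (a, b):A \<times> B. diamonds k E a b)"
      unfolding t_eq to_diamond_def diamonds_def nsets_def by (simp add: Int_insert_left Int_insert_right)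
  qed
  moreover have "finite (SIGMA (a, b):A \<times> B. diamonds k E a b)"
    using fin finite_diamonds[OF kg] by auto
  ultimately have "card (cross_nbrs V E A B (k - 1)) \<le> card (SIGMA (a, b):A \<times> B. diamonds k E a b)"
    by (metis card_image card_mono)
  also have "\<dots> = (\<Sum>(a, b)\<in>A \<times> B. card (diamonds k E a b))"
    using fin finite_diamonds[OF kg] by (simp add: case_prod_beta)
  finally show ?thesis .
qed

lemma mu_separation_pos:
  assumes "mu_separation k \<gamma> \<mu> V E A B" and "finite V"
  shows "0 < \<mu>"
proof -
  have "0 < \<mu> * card A * card B"
    using assms(1) unfolding mu_separation_def by (smt (verit) of_nat_0_le_iff)
  then show ?thesis
    by (simp add: zero_less_mult_iff)
qed

lemma card_diamonds_le_if_adj: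
  fixes \<gamma> :: real
  assumes kg: "kgraph k V E" and "1 \<le> k" and "a \<in> V" "b \<in> V" "a \<noteq> b" and "0 \<le> \<gamma>"
  shows "real (card (diamonds k E a b))
    \<le> (if diamond_adj k \<gamma> V E a b then real (card V choose (k - 1)) else 0) + \<gamma> * (card V choose (k - 1))"
proof (cases "diamond_adj k \<gamma> V E a b")
  case True
  have "real (card (diamonds k E a b)) \<le> card V choose (k - 1)"
    using card_diamonds_le[OF kg \<open>1 \<le> k\<close>] by simp
  then show ?thesis
    using True \<open>0 \<le> \<gamma>\<close> by (simp add: add_increasing2)
next
  case False
  then show ?thesis
    using assms(3-5) unfolding diamond_adj_def by auto
qed

lemma sum_diamonds_le_if_mu_separation:
  assumes kg: "kgraph k V E" and "1 \<le> k" and sep: "mu_separation k \<gamma> \<mu> V E A B" and "\<mu> \<le> \<gamma>"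
  shows "real (\<Sum>(a, b)\<in>A \<times> B. card (diamonds k E a b))
    \<le> 2 * \<gamma> * card A * card B * (card V choose (k - 1))"
proof -
  define C where "C = real (card V choose (k - 1))"
  define P where "P = {(a, b). a \<in> A \<and> b \<in> B \<and> diamond_adj k \<gamma> V E a b}"
  have parts: "A \<inter> B = {}" "A \<union> B = V" and P_small: "real (card P) < \<mu> * card A * card B"
    using sep unfolding mu_separation_def P_def by auto
  have fin: "finite A" "finite B"
    using kg parts(2) unfolding kgraph_def by auto
  have "0 \<le> \<gamma>"
    using mu_separation_pos[OF sep] \<open>\<mu> \<le> \<gamma>\<close> kg by (simp add: kgraph_finite)
  have "real (\<Sum>(a, b)\<in>A \<times> B. card (diamonds k E a b))
      = (\<Sum>(a, b)\<in>A \<times> B. real (card (diamonds k E a b)))"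
    by (simp add: case_prod_beta)
  also have "\<dots> \<le> (\<Sum>p\<in>A \<times> B. (if p \<in> P then C else 0) + \<gamma> * C)"
  proof (rule sum_mono, clarify)
    fix a b assume "a \<in> A" "b \<in> B"
    moreover have "a \<in> V" "b \<in> V" "a \<noteq> b"
      using \<open>a \<in> A\<close> \<open>b \<in> B\<close> parts by auto
    ultimately show "real (card (diamonds k E a b)) \<le> (if (a, b) \<in> P then C else 0) + \<gamma> * C"
      using card_diamonds_le_if_adj[OF kg \<open>1 \<le> k\<close> _ _ _ \<open>0 \<le> \<gamma>\<close>] unfolding P_def C_def by simp
  qed
  also have "\<dots> = card P * C + card A * card B * \<gamma> * C"
  proof -
    have "P \<subseteq> A \<times> B"
      unfolding P_def by auto
    then have "(\<Sum>p\<in>A \<times> B. if p \<in> P then C else 0) = card P * C"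
      using fin by (simp add: sum.inter_restrict[symmetric] Int_absorb1)
    then show ?thesis
      by (simp add: sum.distrib card_cartesian_product)
  qed
  also have "\<dots> \<le> \<mu> * card A * card B * C + \<gamma> * card A * card B * C"
    using P_small unfolding C_def by (intro add_mono mult_right_mono) (auto simp: algebra_simps)
  also have "\<dots> \<le> 2 * \<gamma> * card A * card B * C"
    using \<open>\<mu> \<le> \<gamma>\<close> unfolding C_def by (simp add: mult_right_mono algebra_simps)
  finally show ?thesis
    unfolding C_def .
qed

lemma card_cross_nbrs_le:
  assumes "kgraph k V E" and "1 \<le> k" and "mu_separation k \<gamma> \<mu> V E A B" and "\<mu> \<le> \<gamma>"
  shows "real (card (cross_nbrs V E A B (k - 1)))
    \<le> 2 * \<gamma> * card A * card B * (card V choose (k - 1))"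
proof -
  have "A \<inter> B = {}" "A \<subseteq> V" "B \<subseteq> V"
    using assms(3) unfolding mu_separation_def by auto
  then show ?thesis
    using card_cross_nbrs_le_sum_diamonds[OF assms(1,2)] sum_diamonds_le_if_mu_separation[OF assms]
    by (meson of_nat_le_iff order_trans)
qed

lemma proto_balancers_memI:
  "is_proto_balancer k V E A S X1 X2 X3 \<Longrightarrow> {S \<union> X1, S \<union> X2, S \<union> X3} \<in> proto_balancers k V E A"
  unfolding proto_balancers_def by blast

lemma is_proto_balancer_triple:
  assumes "S \<subseteq> V" "card S = k - 3" and "{d, c, x, y, z} \<subseteq> V - S"
    and "d \<in> A" "c \<in> A" "x \<notin> A" "y \<notin> A" "z \<notin> A" and "d \<noteq> c" "x \<noteq> y" "z \<noteq> x" "z \<noteq> y"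
    and "S \<union> {d, c, x} \<in> E" "S \<union> {d, c, y} \<in> E" "S \<union> {x, y, z} \<in> E"
  shows "is_proto_balancer k V E A S {d, c, x} {d, c, y} {x, y, z}"
proof -
  have "x \<noteq> d" "x \<noteq> c" "y \<noteq> d" "y \<noteq> c" "z \<noteq> d" "z \<noteq> c"
    using assms(4-8) by auto
  then have intersections: "{d, c, x} \<inter> A = {d, c}" "{d, c, y} \<inter> A = {d, c}" "{d, c} \<inter> A = {d, c}"
    "{d, c, x} \<inter> {d, c, y} = {d, c}" "{x, y, z} \<inter> A = {}"
    "{d, c, x} \<inter> {x, y, z} = {x}" "{d, c, y} \<inter> {x, y, z} = {y}"
    using assms(4-12) by auto
  have "card {d, c, x} = 3" "card {d, c, y} = 3" "card {x, y, z} = 3"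
    using \<open>x \<noteq> d\<close> \<open>x \<noteq> c\<close> \<open>y \<noteq> d\<close> \<open>y \<noteq> c\<close> assms(9-12) by auto
  then show ?thesis
    unfolding is_proto_balancer_def intersections using assms(1-3,9,13-15) by simp
qed

section \<open>Both parts of a separation are large\<close>

type_synonym 'a config = "'a set \<times> 'a \<times> 'a \<times> 'a \<times> 'a \<times> 'a \<times> 'a \<times> 'a"

type_synonym 'a quint = "'a set \<times> 'a \<times> 'a \<times> 'a \<times> 'a"

locale codegree_bipartition =
  fixes k :: nat and V :: "'a set" and E :: "'a set set" and A B :: "'a set" and \<delta> :: nat
  assumes kgraph: "kgraph k V E" and three_le_k: "3 \<le> k"
    and parts: "A \<union> B = V" "A \<inter> B = {}"
    and codegree: "\<And>T. T \<in> nsets V (k - 1) \<Longrightarrow> \<delta> \<le> card (nbhd V E T)"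
begin

lemma finite_V: "finite V"
  using kgraph by (rule kgraph_finite)

lemma parts_subset: "A \<subseteq> V" "B \<subseteq> V"
  using parts(1) by auto

lemma finite_parts: "finite A" "finite B"
  using finite_V parts_subset finite_subset by auto

(* Double counting of the triples (u, R, v) with R + u + v an edge: each pair (u, R) has at least
   delta choices of v, and each pair (R + v, u) arises from k - 1 triples. *)
lemma card_part_nbrs_ge:
  "real (card A) * (real ((card V - 1) choose (k - 2)) * \<delta>)
    \<le> real (k - 1) * card (part_nbrs V E A (k - 1))"
proof -
  define D where "D = (SIGMA u:A. SIGMA R:nsets (V - {u}) (k - 2). nbhd V E (insert u R))"
  define Q where "Q = part_nbrs V E A (k - 1)"
  define g where "g = (\<lambda>(u :: 'a, R, v :: 'a). (insert v R, u))"
  have finite_D: "finite D"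
    unfolding D_def using finite_parts(1) finite_V
    by (auto intro!: finite_SigmaI simp: finite_imp_finite_nsets finite_nbhd)
  have image_sub: "g ` D \<subseteq> Q"
    using three_le_k finite_V parts(1) unfolding D_def Q_def part_nbrs_def g_def nsets_def nbhd_def
    by (auto simp: insert_commute intro: rev_finite_subset)
  have "real (card A) * (real ((card V - 1) choose (k - 2)) * \<delta>) \<le> card D"
    unfolding D_def
  proof (rule card_Sigma_ge)
    fix u assume u: "u \<in> A"
    then have "u \<in> V"
      using parts(1) by auto
    show "real ((card V - 1) choose (k - 2)) * \<delta>
      \<le> card (SIGMA R:nsets (V - {u}) (k - 2). nbhd V E (insert u R))"
    proof (rule card_Sigma_ge)
      show "real ((card V - 1) choose (k - 2)) \<le> card (nsets (V - {u}) (k - 2))"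
        using \<open>u \<in> V\<close> finite_V by simp
      fix R assume "R \<in> nsets (V - {u}) (k - 2)"
      then have "u \<notin> R" "finite R" "card R = k - 2" "R \<subseteq> V"
        unfolding nsets_def by auto
      then have "insert u R \<in> nsets V (k - 1)"
        using \<open>u \<in> V\<close> three_le_k unfolding nsets_def by simp
      then show "real \<delta> \<le> card (nbhd V E (insert u R))"
        using codegree by simp
    qed (use finite_V in \<open>auto simp: finite_imp_finite_nsets finite_nbhd\<close>)
  qed (use finite_parts finite_V in \<open>auto intro!: finite_SigmaI simp: finite_imp_finite_nsets finite_nbhd\<close>)
  also have "card D \<le> (k - 1) * card (g ` D)"
  proof (rule card_le_mult_card_image[OF finite_D])
    fix y assume "y \<in> g ` D"
    then obtain T u where y: "y = (T, u)" "T \<in> nsets V (k - 1)"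
      using image_sub unfolding Q_def part_nbrs_def by auto
    have "finite T"
      using y(2) unfolding nsets_def by simp
    moreover have "{x \<in> D. g x = y} \<subseteq> (\<lambda>v. (u, T - {v}, v)) ` T"
      unfolding D_def g_def y nbhd_def by (auto intro!: image_eqI)
    ultimately have "card {x \<in> D. g x = y} \<le> card T"
      by (rule surj_card_le)
    then show "card {x \<in> D. g x = y} \<le> k - 1"
      using y(2) unfolding nsets_def by simp
  qed
  also have "\<dots> \<le> (k - 1) * card Q"
    using image_sub finite_V unfolding Q_def part_nbrs_def
    by (intro mult_left_mono card_mono) (auto intro!: finite_SigmaI simp: finite_imp_finite_nsets finite_nbhd)
  finally show ?thesis
    unfolding Q_def by (metis of_nat_le_iff of_nat_mult)
qed

lemma card_cross_nbrs_ge_if_part_small: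
  assumes "real (card A) \<le> real (card V) / 6" and "real (card V) \<le> 3 * \<delta>"
  shows "real (card V) / 6 * card (part_nbrs V E A (k - 1))
    \<le> card (cross_nbrs V E A B (k - 1))"
proof -
  have B_side: "real (card V) / 6 \<le> card (B \<inter> nbhd V E T)" if "T \<in> nsets V (k - 1)" for T
  proof -
    have "nbhd V E T = A \<inter> nbhd V E T \<union> B \<inter> nbhd V E T"
      using parts(1) by (auto simp: nbhd_def)
    then have "card (nbhd V E T) \<le> card (A \<inter> nbhd V E T) + card (B \<inter> nbhd V E T)"
      by (metis card_Un_le)
    moreover have "card (A \<inter> nbhd V E T) \<le> card A"
      using finite_parts by (simp add: card_mono)
    ultimately show ?thesis
      using codegree[OF that] assms by linarith
  qed
  have fin: "finite (nsets V (k - 1))"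
    using finite_V by (rule finite_imp_finite_nsets)
  have "real (card V) / 6 * card (part_nbrs V E A (k - 1))
      = (\<Sum>T\<in>nsets V (k - 1). real (card (A \<inter> nbhd V E T))) * (real (card V) / 6)"
    unfolding part_nbrs_def using fin finite_parts by (simp add: mult.commute)
  also have "\<dots> = (\<Sum>T\<in>nsets V (k - 1). card (A \<inter> nbhd V E T) * (real (card V) / 6))"
    by (rule sum_distrib_right)
  also have "\<dots> \<le> (\<Sum>T\<in>nsets V (k - 1). card (A \<inter> nbhd V E T) * real (card (B \<inter> nbhd V E T)))"
    using B_side by (intro sum_mono mult_left_mono) auto
  also have "\<dots> = card (cross_nbrs V E A B (k - 1))"
    unfolding cross_nbrs_def using fin finite_parts by (simp add: card_cartesian_product)
  finally show ?thesis .
qed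

(* If A were small, every (k-1)-set would have at least n/6 neighbours in B, giving too many
   cross neighbours. *)
lemma card_part_gt_sixth:
  fixes \<gamma> :: real
  assumes cross: "real (card (cross_nbrs V E A B (k - 1)))
      \<le> 2 * \<gamma> * card A * card B * (card V choose (k - 1))"
    and "0 \<le> \<gamma>" "\<gamma> < 1 / 36" and "real (card V) \<le> 3 * \<delta>" and "k \<le> card V" and "A \<noteq> {}"
  shows "real (card V) / 6 < card A"
proof (rule ccontr)
  assume "\<not> ?thesis"
  then have small: "real (card A) \<le> real (card V) / 6"
    by simp
  define n where "n = real (card V)"
  define a where "a = real (card A)"
  define c where "c = real ((card V - 1) choose (k - 2))"
  define C where "C = real (card V choose (k - 1))"
  define Q where "Q = real (card (part_nbrs V E A (k - 1)))"
  have "0 < n" "0 < a" "0 < c"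
    using three_le_k \<open>k \<le> card V\<close> \<open>A \<noteq> {}\<close> finite_parts finite_V unfolding n_def a_def c_def
    by (auto simp: card_gt_0_iff)
  have B_le: "real (card B) \<le> n"
    unfolding n_def using finite_V parts_subset(2) by (simp add: card_mono)
  have absorption: "real (k - 1) * C = n * c"
  proof -
    have "(k - 1) * (card V choose (k - 1)) = card V * ((card V - 1) choose (k - 2))"
      using times_binomial_minus1_eq[of "k - 1" "card V"] three_le_k by (simp add: numeral_2_eq_2)
    then show ?thesis
      unfolding n_def c_def C_def by (metis of_nat_mult)
  qed
  have "n * n * a * c / 18 = n / 6 * (a * (c * (n / 3)))"
    by simp
  also have "\<dots> \<le> n / 6 * (a * (c * \<delta>))"
    using assms(4) \<open>0 < n\<close> \<open>0 < a\<close> \<open>0 < c\<close> unfolding n_def by simp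
  also have "\<dots> \<le> n / 6 * (real (k - 1) * Q)"
    using card_part_nbrs_ge \<open>0 < n\<close> unfolding a_def c_def Q_def
    by (simp add: mult.assoc)
  also have "\<dots> = real (k - 1) * (n / 6 * Q)"
    by simp
  also have "\<dots> \<le> real (k - 1) * (2 * \<gamma> * a * card B * C)"
    using card_cross_nbrs_ge_if_part_small[OF small assms(4)] cross
    unfolding n_def Q_def a_def C_def by (intro mult_left_mono) auto
  also have "\<dots> \<le> real (k - 1) * (2 * \<gamma> * a * n * C)"
    using B_le \<open>0 \<le> \<gamma>\<close> \<open>0 < a\<close> unfolding C_def by (intro mult_left_mono mult_right_mono) auto
  also have "\<dots> = 2 * \<gamma> * a * n * (real (k - 1) * C)"
    by (simp only: mult_ac)
  also have "\<dots> = 2 * \<gamma> * (n * n * a * c)"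
    unfolding absorption by (simp only: mult_ac)
  finally have "1 / 18 * (n * n * a * c) \<le> 2 * \<gamma> * (n * n * a * c)"
    by simp
  then have "1 / 18 \<le> 2 * \<gamma>"
    using \<open>0 < n\<close> \<open>0 < a\<close> \<open>0 < c\<close> by (simp add: mult_le_cancel_right)
  then show False
    using \<open>\<gamma> < 1 / 36\<close> by simp
qed

section \<open>Configurations\<close>

definition nbhd2 :: "'a set \<Rightarrow> 'a \<Rightarrow> 'a \<Rightarrow> 'a set" where
  "nbhd2 S p q = nbhd V E (insert p (insert q S))"

lemma mem_nbhd2_iff:
  "u \<in> nbhd2 S p q \<longleftrightarrow> u \<in> V \<and> u \<notin> S \<and> u \<noteq> p \<and> u \<noteq> q \<and> insert u (insert p (insert q S)) \<in> E"
  unfolding nbhd2_def nbhd_def by auto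

lemma finite_nbhd2: "finite (nbhd2 S p q)"
  unfolding nbhd2_def using finite_V by (rule finite_nbhd)

lemma nbhd2_commute: "nbhd2 S p q = nbhd2 S q p"
  unfolding nbhd2_def by (simp add: insert_commute)

lemma mem_nbhd2_swap:
  assumes "u \<in> nbhd2 S p q" and "q \<in> V - S" and "p \<noteq> q"
  shows "q \<in> nbhd2 S p u"
proof -
  have "insert q (insert p (insert u S)) = insert u (insert p (insert q S))"
    by blast
  then show ?thesis
    using assms unfolding mem_nbhd2_iff by auto
qed

lemma card_nbhd2_ge:
  assumes "S \<in> nsets V (k - 3)" and "p \<in> V - S" "q \<in> V - S" "p \<noteq> q"
  shows "\<delta> \<le> card (nbhd2 S p q)"
proof -
  have "insert p (insert q S) \<in> nsets V (k - 1)"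
    using assms three_le_k unfolding nsets_def by auto
  then show ?thesis
    unfolding nbhd2_def by (rule codegree)
qed

definition config_tails :: "'a set \<Rightarrow> 'a \<Rightarrow> 'a \<Rightarrow> ('a \<times> 'a \<times> 'a \<times> 'a) set" where
  "config_tails S d c = (SIGMA x:nbhd2 S d c. SIGMA y:nbhd2 S d c - {x}. SIGMA z:nbhd2 S x y.
     covered_twice (nbhd2 S x d) (nbhd2 S x y) (nbhd2 S x z))"

lemma finite_config_tails: "finite (config_tails S d c)"
  unfolding config_tails_def covered_twice_def by (auto intro!: finite_SigmaI simp: finite_nbhd2)

lemma card_config_tails_ge:
  assumes S: "S \<in> nsets V (k - 3)" and "d \<in> V - S" "c \<in> V - S" "d \<noteq> c"
    and "1 \<le> \<delta>" and "card V \<le> 3 * \<delta>"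
  shows "real \<delta> * ((real \<delta> - 1) * (real \<delta> * ((3 * real \<delta> - card V) / 2))) \<le> card (config_tails S d c)"
  unfolding config_tails_def
proof (rule card_Sigma_ge)
  show "real \<delta> \<le> card (nbhd2 S d c)"
    using card_nbhd2_ge[OF S] assms by simp
  fix x assume x: "x \<in> nbhd2 S d c"
  then have "x \<in> V - S" "x \<noteq> d"
    by (auto simp: mem_nbhd2_iff)
  show "(real \<delta> - 1) * (real \<delta> * ((3 * real \<delta> - card V) / 2))
    \<le> card (SIGMA y:nbhd2 S d c - {x}. SIGMA z:nbhd2 S x y.
        covered_twice (nbhd2 S x d) (nbhd2 S x y) (nbhd2 S x z))"
  proof (rule card_Sigma_ge)
    have "\<delta> \<le> card (nbhd2 S d c)"
      using card_nbhd2_ge[OF S] assms by simp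
    then show "real \<delta> - 1 \<le> card (nbhd2 S d c - {x})"
      using x \<open>1 \<le> \<delta>\<close> by (simp add: finite_nbhd2 of_nat_diff)
    fix y assume y: "y \<in> nbhd2 S d c - {x}"
    then have "y \<in> V - S" "y \<noteq> x"
      by (auto simp: mem_nbhd2_iff)
    show "real \<delta> * ((3 * real \<delta> - card V) / 2)
      \<le> card (SIGMA z:nbhd2 S x y. covered_twice (nbhd2 S x d) (nbhd2 S x y) (nbhd2 S x z))"
    proof (rule card_Sigma_ge)
      show "real \<delta> \<le> card (nbhd2 S x y)"
        using card_nbhd2_ge[OF S] \<open>x \<in> V - S\<close> \<open>y \<in> V - S\<close> \<open>y \<noteq> x\<close> by simp
      fix z assume "z \<in> nbhd2 S x y"
      then have "z \<in> V - S" "z \<noteq> x"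
        by (auto simp: mem_nbhd2_iff)
      have "\<delta> \<le> card (nbhd2 S x d)" "\<delta> \<le> card (nbhd2 S x y)" "\<delta> \<le> card (nbhd2 S x z)"
        using card_nbhd2_ge[OF S] \<open>d \<in> V - S\<close> \<open>x \<in> V - S\<close> \<open>y \<in> V - S\<close> \<open>z \<in> V - S\<close>
          \<open>x \<noteq> d\<close> \<open>y \<noteq> x\<close> \<open>z \<noteq> x\<close>
        by auto
      then have "3 * \<delta> \<le> card (nbhd2 S x d) + card (nbhd2 S x y) + card (nbhd2 S x z)"
        by linarith
      also have "\<dots> \<le> card V + 2 * card (covered_twice (nbhd2 S x d) (nbhd2 S x y) (nbhd2 S x z))"
        by (rule card_covered_twice_ge[OF finite_V]) (auto simp: mem_nbhd2_iff)
      finally have "real (3 * \<delta>)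
          \<le> real (card V + 2 * card (covered_twice (nbhd2 S x d) (nbhd2 S x y) (nbhd2 S x z)))"
        by (simp only: of_nat_le_iff)
      then show "(3 * real \<delta> - card V) / 2 \<le> card (covered_twice (nbhd2 S x d) (nbhd2 S x y) (nbhd2 S x z))"
        by simp
    qed (use assms in \<open>auto simp: finite_nbhd2 covered_twice_def\<close>)
  qed (use assms in \<open>auto intro!: finite_SigmaI simp: finite_nbhd2 covered_twice_def\<close>)
qed (use assms in \<open>auto intro!: finite_SigmaI simp: finite_nbhd2 covered_twice_def\<close>)

definition opposite :: "'a \<Rightarrow> 'a \<Rightarrow> bool" where
  "opposite u v \<longleftrightarrow> (u \<in> A \<longleftrightarrow> v \<notin> A)"

definition same_side :: "'a \<Rightarrow> 'a \<Rightarrow> 'a \<Rightarrow> 'a" where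
  "same_side a b c = (if c \<in> A then a else b)"

definition configs :: "'a config set" where
  "configs = (SIGMA S:nsets V (k - 3). SIGMA a:A - S. SIGMA b:B - S. SIGMA c:nbhd2 S a b.
     config_tails S (same_side a b c) c)"

lemma card_configs_ge:
  assumes "k \<le> card A" "k \<le> card B" and "1 \<le> \<delta>" and "card V \<le> 3 * \<delta>"
  shows "(card V choose (k - 3)) * ((card A - real (k - 3)) * ((card B - real (k - 3)) *
      (\<delta> * (real \<delta> * ((real \<delta> - 1) * (real \<delta> * ((3 * real \<delta> - card V) / 2)))))))
    \<le> card configs"
  unfolding configs_def
proof (rule card_Sigma_ge)
  show "real (card V choose (k - 3)) \<le> card (nsets V (k - 3))"
    by simp
  fix S assume S: "S \<in> nsets V (k - 3)"
  have part_minus_S: "card P - real (k - 3) \<le> card (P - S)" if "k \<le> card P" for P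
    using diff_card_le_card_Diff[of S P] S that unfolding nsets_def by simp
  show "(card A - real (k - 3)) * ((card B - real (k - 3)) *
      (\<delta> * (real \<delta> * ((real \<delta> - 1) * (real \<delta> * ((3 * real \<delta> - card V) / 2))))))
    \<le> card (SIGMA a:A - S. SIGMA b:B - S. SIGMA c:nbhd2 S a b. config_tails S (same_side a b c) c)"
  proof (rule card_Sigma_ge)
    fix a assume a: "a \<in> A - S"
    show "(card B - real (k - 3)) *
        (\<delta> * (real \<delta> * ((real \<delta> - 1) * (real \<delta> * ((3 * real \<delta> - card V) / 2)))))
      \<le> card (SIGMA b:B - S. SIGMA c:nbhd2 S a b. config_tails S (same_side a b c) c)"
    proof (rule card_Sigma_ge)
      fix b assume b: "b \<in> B - S"
      have "a \<in> V - S" "b \<in> V - S" "a \<noteq> b"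
        using a b parts by auto
      show "\<delta> * (real \<delta> * ((real \<delta> - 1) * (real \<delta> * ((3 * real \<delta> - card V) / 2))))
        \<le> card (SIGMA c:nbhd2 S a b. config_tails S (same_side a b c) c)"
      proof (rule card_Sigma_ge)
        show "real \<delta> \<le> card (nbhd2 S a b)"
          using card_nbhd2_ge[OF S \<open>a \<in> V - S\<close> \<open>b \<in> V - S\<close> \<open>a \<noteq> b\<close>] by simp
        fix c assume "c \<in> nbhd2 S a b"
        then have "c \<in> V - S" "same_side a b c \<in> V - S" "same_side a b c \<noteq> c"
          using \<open>a \<in> V - S\<close> \<open>b \<in> V - S\<close> by (auto simp: mem_nbhd2_iff same_side_def)
        then show "real \<delta> * ((real \<delta> - 1) * (real \<delta> * ((3 * real \<delta> - card V) / 2)))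
          \<le> card (config_tails S (same_side a b c) c)"
          using card_config_tails_ge[OF S] assms(3,4) by simp
      qed (use assms in \<open>auto simp: finite_nbhd2 finite_config_tails\<close>)
    qed (use assms part_minus_S in \<open>auto intro!: finite_SigmaI simp: finite_parts finite_nbhd2 finite_config_tails\<close>)
  qed (use assms part_minus_S in \<open>auto intro!: finite_SigmaI simp: finite_parts finite_nbhd2 finite_config_tails\<close>)
qed (use assms finite_V in \<open>auto intro!: finite_SigmaI simp: finite_imp_finite_nsets finite_parts finite_nbhd2
  finite_config_tails\<close>)

(* Lists the vertex in A among d, e first, so that a configuration is given by
   (S, d, e, c, x, y, z, v) with d on the side of c, whichever side that is. *)
definition config :: "'a set \<Rightarrow> 'a \<Rightarrow> 'a \<Rightarrow> 'a \<Rightarrow> 'a \<Rightarrow> 'a \<Rightarrow> 'a \<Rightarrow> 'a \<Rightarrow> 'a config" where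
  "config S d e c x y z v = (if d \<in> A then (S, d, e, c, x, y, z, v) else (S, e, d, c, x, y, z, v))"

lemma configsE:
  assumes "\<sigma> \<in> configs"
  obtains S d e c x y z v where "\<sigma> = config S d e c x y z v" and "S \<in> nsets V (k - 3)"
    and "d \<in> V - S" "c \<in> V - S" "d \<noteq> c" "\<not> opposite d c" "opposite e c"
    and "e \<in> nbhd2 S d c" and "(x, y, z, v) \<in> config_tails S d c"
proof -
  obtain S a b c x y z v where \<sigma>: "\<sigma> = (S, a, b, c, x, y, z, v)"
    by (cases \<sigma>) auto
  then have S: "S \<in> nsets V (k - 3)" and ab: "a \<in> A - S" "b \<in> B - S" and c: "c \<in> nbhd2 S a b"
    and tail: "(x, y, z, v) \<in> config_tails S (same_side a b c) c"
    using assms unfolding configs_def by auto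
  define d e where "d = same_side a b c" and "e = (if c \<in> A then b else a)"
  have "a \<in> V - S" "b \<in> V - S" "a \<noteq> b"
    using ab parts by auto
  then have "c \<in> nbhd2 S d e" "e \<in> V - S" "d \<noteq> e"
    using c nbhd2_commute unfolding d_def e_def same_side_def by auto
  then have "e \<in> nbhd2 S d c"
    by (rule mem_nbhd2_swap)
  moreover have "\<sigma> = config S d e c x y z v" "d \<in> V - S" "\<not> opposite d c" "opposite e c"
    using \<sigma> ab parts(2) \<open>a \<in> V - S\<close> \<open>b \<in> V - S\<close>
    unfolding d_def e_def config_def same_side_def opposite_def by auto
  moreover have "c \<in> V - S" "d \<noteq> c"
    using c \<open>c \<in> nbhd2 S d e\<close> by (auto simp: mem_nbhd2_iff)
  ultimately show thesis
    using that S tail unfolding d_def by blast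
qed

definition balanced :: "'a config \<Rightarrow> bool" where
  "balanced = (\<lambda>(S, a, b, c, x, y, z, v). opposite x c \<and> opposite y c \<and> opposite z c)"

lemma balanced_config:
  "balanced (config S d e c x y z v) \<longleftrightarrow> opposite x c \<and> opposite y c \<and> opposite z c"
  unfolding balanced_def config_def by simp

definition mixed_quints :: "'a quint set" where
  "mixed_quints = {(S, p, q, u, w). S \<in> nsets V (k - 3) \<and> p \<in> V - S \<and> q \<in> V - S \<and> p \<noteq> q \<and>
     u \<in> nbhd2 S p q \<and> w \<in> nbhd2 S p q \<and> opposite u w}"

lemma finite_mixed_quints: "finite mixed_quints"
  by (rule finite_subset[of _ "Pow V \<times> V \<times> V \<times> V \<times> V"])
    (auto simp: mixed_quints_def nsets_def mem_nbhd2_iff finite_V)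

(* If x or y is on the side of d, then S + d + c has neighbours on both sides (e is one of them).
   Otherwise z is on the side of d, and the two neighbourhoods containing v give the mixed pair. *)
lemma unbalanced_config_mixed:
  assumes S: "S \<in> nsets V (k - 3)" and "d \<in> V - S" "c \<in> V - S" "d \<noteq> c"
    and "\<not> opposite d c" "opposite e c" and "e \<in> nbhd2 S d c"
    and tail: "(x, y, z, v) \<in> config_tails S d c"
    and unbalanced: "\<not> (opposite x c \<and> opposite y c \<and> opposite z c)"
  shows "(S, d, c, x, e) \<in> mixed_quints \<or> (S, d, c, y, e) \<in> mixed_quints \<or> (S, x, v, d, y) \<in> mixed_quints
    \<or> (S, x, d, c, v) \<in> mixed_quints \<or> (S, x, z, v, y) \<in> mixed_quints \<or> (S, x, y, z, v) \<in> mixed_quints"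
proof -
  have x: "x \<in> nbhd2 S d c" and y: "y \<in> nbhd2 S d c" "y \<noteq> x" and z: "z \<in> nbhd2 S x y"
    and v: "v \<in> covered_twice (nbhd2 S x d) (nbhd2 S x y) (nbhd2 S x z)"
    using tail unfolding config_tails_def by auto
  have in_V: "x \<in> V - S" "y \<in> V - S" "z \<in> V - S" "v \<in> V - S"
    and distinct: "x \<noteq> d" "x \<noteq> c" "z \<noteq> x" "v \<noteq> x"
    using x y z v by (auto simp: mem_nbhd2_iff covered_twice_def)
  have "c \<in> nbhd2 S x d"
    using mem_nbhd2_swap[OF x \<open>c \<in> V - S\<close> \<open>d \<noteq> c\<close>] nbhd2_commute[of S x d] by simp
  have "y \<in> nbhd2 S x z"
    using mem_nbhd2_swap[OF z] in_V y by simp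
  have "d \<in> nbhd2 S x v" if "v \<in> nbhd2 S x d"
    using mem_nbhd2_swap[OF that \<open>d \<in> V - S\<close>] distinct by simp
  moreover have "y \<in> nbhd2 S x v" if "v \<in> nbhd2 S x y"
    using mem_nbhd2_swap[OF that] in_V y by simp
  ultimately show ?thesis
    using assms x y z v in_V distinct \<open>c \<in> nbhd2 S x d\<close> \<open>y \<in> nbhd2 S x z\<close>
    unfolding mixed_quints_def covered_twice_def opposite_def by auto
qed

(* The six positions in config S d e c x y z v at which unbalanced_config_mixed finds the mixed
   quintuple (S, p, q, u, w); r1, r2, r3 are the remaining vertices. *)
definition rearrangements :: "'a quint \<times> 'a \<times> 'a \<times> 'a \<Rightarrow> 'a config set" where
  "rearrangements = (\<lambda>((S, p, q, u, w), r1, r2, r3).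
     {config S p w q u r1 r2 r3, config S p w q r1 u r2 r3, config S u r1 r2 p w r3 q,
      config S q r1 u p r2 r3 w, config S r1 r2 r3 p w q u, config S r1 r2 r3 p q u w})"

lemma finite_rearrangements: "finite (rearrangements t)"
  unfolding rearrangements_def by (simp add: case_prod_beta)

lemma card_rearrangements_le: "card (rearrangements t) \<le> 6"
  unfolding rearrangements_def case_prod_beta by (intro card_insert_le_m1) simp_all

lemma unbalanced_configs_subset:
  "{\<sigma> \<in> configs. \<not> balanced \<sigma>} \<subseteq> (\<Union>t\<in>mixed_quints \<times> V \<times> V \<times> V. rearrangements t)"
proof safe
  fix \<sigma> assume "\<sigma> \<in> configs" and "\<not> balanced \<sigma>"
  obtain S d e c x y z v where \<sigma>: "\<sigma> = config S d e c x y z v" and S: "S \<in> nsets V (k - 3)"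
    and d: "d \<in> V - S" "c \<in> V - S" "d \<noteq> c" "\<not> opposite d c" "opposite e c"
    and e: "e \<in> nbhd2 S d c" and tail: "(x, y, z, v) \<in> config_tails S d c"
    using \<open>\<sigma> \<in> configs\<close> by (rule configsE)
  have unbalanced: "\<not> (opposite x c \<and> opposite y c \<and> opposite z c)"
    using \<open>\<not> balanced \<sigma>\<close> unfolding \<sigma> balanced_config .
  have in_V: "c \<in> V" "d \<in> V" "e \<in> V" "x \<in> V" "y \<in> V" "z \<in> V" "v \<in> V"
    using d e tail by (auto simp: config_tails_def mem_nbhd2_iff covered_twice_def)
  from unbalanced_config_mixed[OF S d e tail unbalanced]
  show "\<sigma> \<in> (\<Union>t\<in>mixed_quints \<times> V \<times> V \<times> V. rearrangements t)"
  proof (elim disjE)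
    assume "(S, d, c, x, e) \<in> mixed_quints"
    then show ?thesis
      using in_V by (intro UN_I[of "((S, d, c, x, e), y, z, v)"]) (auto simp: \<sigma> rearrangements_def)
  next
    assume "(S, d, c, y, e) \<in> mixed_quints"
    then show ?thesis
      using in_V by (intro UN_I[of "((S, d, c, y, e), x, z, v)"]) (auto simp: \<sigma> rearrangements_def)
  next
    assume "(S, x, v, d, y) \<in> mixed_quints"
    then show ?thesis
      using in_V by (intro UN_I[of "((S, x, v, d, y), e, c, z)"]) (auto simp: \<sigma> rearrangements_def)
  next
    assume "(S, x, d, c, v) \<in> mixed_quints"
    then show ?thesis
      using in_V by (intro UN_I[of "((S, x, d, c, v), e, y, z)"]) (auto simp: \<sigma> rearrangements_def)
  next
    assume "(S, x, z, v, y) \<in> mixed_quints"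
    then show ?thesis
      using in_V by (intro UN_I[of "((S, x, z, v, y), d, e, c)"]) (auto simp: \<sigma> rearrangements_def)
  next
    assume "(S, x, y, z, v) \<in> mixed_quints"
    then show ?thesis
      using in_V by (intro UN_I[of "((S, x, y, z, v), d, e, c)"]) (auto simp: \<sigma> rearrangements_def)
  qed
qed

lemma card_unbalanced_configs_le:
  "card {\<sigma> \<in> configs. \<not> balanced \<sigma>} \<le> 6 * card V ^ 3 * card mixed_quints"
proof -
  have fin: "finite (mixed_quints \<times> V \<times> V \<times> V)"
    using finite_mixed_quints finite_V by simp
  have "card {\<sigma> \<in> configs. \<not> balanced \<sigma>} \<le> card (\<Union>t\<in>mixed_quints \<times> V \<times> V \<times> V. rearrangements t)"
    using unbalanced_configs_subset fin finite_rearrangements by (intro card_mono) auto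
  also have "\<dots> \<le> (\<Sum>t\<in>mixed_quints \<times> V \<times> V \<times> V. card (rearrangements t))"
    using fin by (rule card_UN_le)
  also have "\<dots> \<le> (\<Sum>t\<in>mixed_quints \<times> V \<times> V \<times> V. 6)"
    by (rule sum_mono) (rule card_rearrangements_le)
  also have "\<dots> = 6 * card V ^ 3 * card mixed_quints"
    by (simp add: card_cartesian_product power3_eq_cube)
  finally show ?thesis .
qed

lemma card_mixed_quints_le: "card mixed_quints \<le> 2 * (k - 1) ^ 2 * card (cross_nbrs V E A B (k - 1))"
proof -
  define h where "h = (\<lambda>(S, p :: 'a, q, u :: 'a, w :: 'a). (insert p (insert q S), u, w))"
  have image_sub: "h ` mixed_quints \<subseteq> cross_nbrs V E A B (k - 1) \<union> cross_nbrs V E B A (k - 1)"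
  proof (rule image_subsetI)
    fix t assume "t \<in> mixed_quints"
    then obtain S p q u w where t: "t = (S, p, q, u, w)" and S: "S \<in> nsets V (k - 3)"
      and "p \<in> V - S" "q \<in> V - S" "p \<noteq> q" and uw: "u \<in> nbhd2 S p q" "w \<in> nbhd2 S p q" "opposite u w"
      unfolding mixed_quints_def by auto
    then have "insert p (insert q S) \<in> nsets V (k - 1)"
      using three_le_k unfolding nsets_def by auto
    moreover have "u \<in> V" "w \<in> V"
      using uw by (auto simp: mem_nbhd2_iff)
    ultimately show "h t \<in> cross_nbrs V E A B (k - 1) \<union> cross_nbrs V E B A (k - 1)"
      using uw parts unfolding t h_def cross_nbrs_def nbhd2_def opposite_def by auto
  qed
  have "card mixed_quints \<le> (k - 1) ^ 2 * card (h ` mixed_quints)"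
  proof (rule card_le_mult_card_image[OF finite_mixed_quints])
    fix s assume "s \<in> h ` mixed_quints"
    then obtain T u w where s: "s = (T, u, w)" and "T \<in> nsets V (k - 1)"
      using image_sub unfolding cross_nbrs_def by auto
    then have "finite (T \<times> T)" "card (T \<times> T) = (k - 1) ^ 2"
      unfolding nsets_def by (auto simp: card_cartesian_product power2_eq_square)
    moreover have "{t \<in> mixed_quints. h t = s} \<subseteq> (\<lambda>(p, q). (T - {p, q}, p, q, u, w)) ` (T \<times> T)"
    proof
      fix t assume "t \<in> {t \<in> mixed_quints. h t = s}"
      then obtain S p q where "t = (S, p, q, u, w)" "insert p (insert q S) = T" "p \<notin> S" "q \<notin> S"
        unfolding mixed_quints_def h_def s by auto
      then show "t \<in> (\<lambda>(p, q). (T - {p, q}, p, q, u, w)) ` (T \<times> T)"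
        by (auto intro!: image_eqI[of _ _ "(p, q)"])
    qed
    ultimately show "card {t \<in> mixed_quints. h t = s} \<le> (k - 1) ^ 2"
      using surj_card_le[of "T \<times> T" "{t \<in> mixed_quints. h t = s}"] by simp
  qed
  also have "card (h ` mixed_quints) \<le> card (cross_nbrs V E A B (k - 1) \<union> cross_nbrs V E B A (k - 1))"
    using image_sub finite_V by (intro card_mono) (auto simp: finite_cross_nbrs)
  also have "\<dots> \<le> 2 * card (cross_nbrs V E A B (k - 1))"
    using card_Un_le[of "cross_nbrs V E A B (k - 1)" "cross_nbrs V E B A (k - 1)"]
    by (simp add: card_cross_nbrs_swap)
  finally show ?thesis
    by (simp add: mult.commute mult.left_commute)
qed

definition proto_triple :: "'a config \<Rightarrow> 'a set set" where
  "proto_triple = (\<lambda>(S, a, b, c, x, y, z, v).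
     {S \<union> {same_side a b c, c, x}, S \<union> {same_side a b c, c, y}, S \<union> {x, y, z}})"

lemma proto_triple_config:
  assumes "\<not> opposite d c" and "opposite e c"
  shows "proto_triple (config S d e c x y z v) = {S \<union> {d, c, x}, S \<union> {d, c, y}, S \<union> {x, y, z}}"
  using assms unfolding proto_triple_def config_def same_side_def opposite_def by auto

lemma proto_triple_mem_proto_balancers:
  assumes "\<sigma> \<in> configs" and "balanced \<sigma>"
  shows "proto_triple \<sigma> \<in> proto_balancers k V E A \<union> proto_balancers k V E B"
proof -
  obtain S d e c x y z v where \<sigma>: "\<sigma> = config S d e c x y z v" and S: "S \<in> nsets V (k - 3)"
    and d: "d \<in> V - S" "c \<in> V - S" "d \<noteq> c" "\<not> opposite d c" "opposite e c"
    and tail: "(x, y, z, v) \<in> config_tails S d c"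
    using assms(1) by (rule configsE)
  have sides: "opposite x c" "opposite y c" "opposite z c"
    using assms(2) unfolding \<sigma> balanced_config by auto
  have x: "x \<in> nbhd2 S d c" and y: "y \<in> nbhd2 S d c" "x \<noteq> y" and z: "z \<in> nbhd2 S x y"
    using tail unfolding config_tails_def by auto
  have "S \<union> {d, c, x} = insert x (insert d (insert c S))" "S \<union> {d, c, y} = insert y (insert d (insert c S))"
    "S \<union> {x, y, z} = insert z (insert x (insert y S))"
    by auto
  then have edges: "S \<union> {d, c, x} \<in> E" "S \<union> {d, c, y} \<in> E" "S \<union> {x, y, z} \<in> E"
    using x y z unfolding mem_nbhd2_iff by simp_all
  have vertices: "x \<in> V - S" "y \<in> V - S" "z \<in> V - S" "z \<noteq> x" "z \<noteq> y"
    using x y z unfolding mem_nbhd2_iff by auto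
  have S_props: "S \<subseteq> V" "card S = k - 3"
    using S unfolding nsets_def by auto
  show ?thesis
  proof (cases "c \<in> A")
    case True
    then have "d \<in> A" "x \<notin> A" "y \<notin> A" "z \<notin> A"
      using d(4) sides unfolding opposite_def by auto
    then have "is_proto_balancer k V E A S {d, c, x} {d, c, y} {x, y, z}"
      using True d vertices edges y(2) by (intro is_proto_balancer_triple[OF S_props]) simp_all
    then show ?thesis
      unfolding \<sigma> proto_triple_config[OF d(4,5)] by (auto dest: proto_balancers_memI)
  next
    case False
    then have "c \<in> B" "d \<in> B" "x \<notin> B" "y \<notin> B" "z \<notin> B"
      using d sides vertices parts unfolding opposite_def by auto
    then have "is_proto_balancer k V E B S {d, c, x} {d, c, y} {x, y, z}"
      using d vertices edges y(2) by (intro is_proto_balancer_triple[OF S_props]) simp_all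
    then show ?thesis
      unfolding \<sigma> proto_triple_config[OF d(4,5)] by (auto dest: proto_balancers_memI)
  qed
qed

lemma finite_configs: "finite configs"
  unfolding configs_def using finite_V
  by (auto intro!: finite_SigmaI simp: finite_imp_finite_nsets finite_parts finite_nbhd2 finite_config_tails)

lemma card_proto_triple_fibre_le:
  assumes "\<sigma>0 \<in> configs"
  shows "card {\<sigma> \<in> configs. proto_triple \<sigma> = proto_triple \<sigma>0} \<le> 2 ^ (k + 2) * (k + 2) ^ 5 * card V ^ 2"
proof -
  have Union_proto_triple: "\<Union> (proto_triple \<sigma>) = S \<union> {d, c, x, y, z}"
    if "\<sigma> = config S d e c x y z v" "\<not> opposite d c" "opposite e c" for \<sigma> S d e c x y z v
    unfolding that(1) proto_triple_config[OF that(2,3)] by auto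
  define U where "U = \<Union> (proto_triple \<sigma>0)"
  obtain S0 d0 e0 c0 x0 y0 z0 v0 where "\<sigma>0 = config S0 d0 e0 c0 x0 y0 z0 v0" "S0 \<in> nsets V (k - 3)"
    "\<not> opposite d0 c0" "opposite e0 c0"
    using assms by (rule configsE)
  then have U: "U = S0 \<union> {d0, c0, x0, y0, z0}" and "finite S0" "card S0 = k - 3"
    unfolding U_def nsets_def by (auto simp: Union_proto_triple)
  then have "finite U"
    by simp
  have "card U \<le> card S0 + card {d0, c0, x0, y0, z0}"
    unfolding U by (rule card_Un_le)
  also have "card {d0, c0, x0, y0, z0} \<le> 5"
    by (simp add: card_insert_le_m1)
  finally have "card U \<le> k + 2"
    using \<open>card S0 = k - 3\<close> three_le_k by simp
  define F where "F = Pow U \<times> U \<times> V \<times> U \<times> U \<times> U \<times> U \<times> V"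
  have "{\<sigma> \<in> configs. proto_triple \<sigma> = proto_triple \<sigma>0}
      \<subseteq> (\<lambda>(S, d, e, c, x, y, z, v). config S d e c x y z v) ` F"
  proof safe
    fix \<sigma> assume "\<sigma> \<in> configs" and same: "proto_triple \<sigma> = proto_triple \<sigma>0"
    obtain S d e c x y z v where \<sigma>: "\<sigma> = config S d e c x y z v"
      and sides: "\<not> opposite d c" "opposite e c"
      and "e \<in> nbhd2 S d c" and "(x, y, z, v) \<in> config_tails S d c"
      using \<open>\<sigma> \<in> configs\<close> by (rule configsE)
    then have "e \<in> V" "v \<in> V"
      by (auto simp: mem_nbhd2_iff config_tails_def covered_twice_def)
    moreover have "S \<union> {d, c, x, y, z} = U"
      using same Union_proto_triple[OF \<sigma> sides] unfolding U_def by simp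
    ultimately show "\<sigma> \<in> (\<lambda>(S, d, e, c, x, y, z, v). config S d e c x y z v) ` F"
      unfolding \<sigma> F_def by (auto intro!: image_eqI[of _ _ "(S, d, e, c, x, y, z, v)"])
  qed
  then have "card {\<sigma> \<in> configs. proto_triple \<sigma> = proto_triple \<sigma>0} \<le> card F"
    using \<open>finite U\<close> finite_V unfolding F_def by (intro surj_card_le) auto
  also have "card F = 2 ^ card U * card U ^ 5 * card V ^ 2"
    using \<open>finite U\<close> unfolding F_def
    by (simp add: card_cartesian_product card_Pow power2_eq_square power_numeral_reduce)
  also have "\<dots> \<le> 2 ^ (k + 2) * (k + 2) ^ 5 * card V ^ 2"
    using \<open>card U \<le> k + 2\<close> by (intro mult_le_mono1 mult_le_mono power_increasing power_mono) auto
  finally show ?thesis .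
qed

lemma card_balanced_configs_le:
  "card {\<sigma> \<in> configs. balanced \<sigma>}
    \<le> 2 ^ (k + 2) * (k + 2) ^ 5 * card V ^ 2 * card (proto_balancers k V E A \<union> proto_balancers k V E B)"
proof -
  define K where "K = 2 ^ (k + 2) * (k + 2) ^ 5 * card V ^ 2"
  define PB where "PB = proto_balancers k V E A \<union> proto_balancers k V E B"
  have "finite PB"
    by (rule finite_subset[of _ "Pow (Pow V)"])
      (auto simp: PB_def proto_balancers_def is_proto_balancer_def finite_V)
  have "card {\<sigma> \<in> configs. balanced \<sigma>} \<le> K * card (proto_triple ` {\<sigma> \<in> configs. balanced \<sigma>})"
  proof (rule card_le_mult_card_image)
    show "finite {\<sigma> \<in> configs. balanced \<sigma>}"
      using finite_configs by simp
    fix Y assume "Y \<in> proto_triple ` {\<sigma> \<in> configs. balanced \<sigma>}"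
    then obtain \<sigma>0 where "\<sigma>0 \<in> configs" "Y = proto_triple \<sigma>0"
      by auto
    then have "card {\<sigma> \<in> {\<sigma> \<in> configs. balanced \<sigma>}. proto_triple \<sigma> = Y}
        \<le> card {\<sigma> \<in> configs. proto_triple \<sigma> = proto_triple \<sigma>0}"
      using finite_configs by (intro card_mono) auto
    also have "\<dots> \<le> K"
      unfolding K_def using \<open>\<sigma>0 \<in> configs\<close> by (rule card_proto_triple_fibre_le)
    finally show "card {\<sigma> \<in> {\<sigma> \<in> configs. balanced \<sigma>}. proto_triple \<sigma> = Y} \<le> K" .
  qed
  also have "\<dots> \<le> K * card PB"
  proof -
    have "proto_triple ` {\<sigma> \<in> configs. balanced \<sigma>} \<subseteq> PB"
      using proto_triple_mem_proto_balancers unfolding PB_def by blast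
    then show ?thesis
      using \<open>finite PB\<close> by (intro mult_left_mono card_mono) auto
  qed
  finally show ?thesis
    unfolding K_def PB_def .
qed

lemma card_configs_le:
  "card configs \<le> 2 ^ (k + 2) * (k + 2) ^ 5 * card V ^ 2
      * card (proto_balancers k V E A \<union> proto_balancers k V E B) + 6 * card V ^ 3 * card mixed_quints"
proof -
  have "card configs \<le> card ({\<sigma> \<in> configs. balanced \<sigma>} \<union> {\<sigma> \<in> configs. \<not> balanced \<sigma>})"
    using finite_configs by (intro card_mono) auto
  also have "\<dots> \<le> card {\<sigma> \<in> configs. balanced \<sigma>} + card {\<sigma> \<in> configs. \<not> balanced \<sigma>}"
    by (rule card_Un_le)
  finally show ?thesis
    using card_balanced_configs_le card_unbalanced_configs_le by linarith
qed

lemma card_configs_ge_power: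
  assumes "real (card V) / 6 < card A" "real (card V) / 6 < card B" and "12 * k \<le> card V"
    and "0 \<le> \<epsilon>" and "(1 / 3 + \<epsilon>) * card V \<le> \<delta>"
  shows "\<epsilon> / 15552 * real (card V) ^ 7 * (card V choose (k - 3)) \<le> card configs"
proof -
  define n where "n = real (card V)"
  have "12 * real k \<le> n"
    using assms(3) unfolding n_def by linarith
  then have "0 \<le> n" and "0 \<le> \<epsilon> * n"
    using \<open>0 \<le> \<epsilon>\<close> by auto
  have A: "n / 12 \<le> card A - real (k - 3)" and B: "n / 12 \<le> card B - real (k - 3)"
    using assms(1,2) \<open>12 * real k \<le> n\<close> three_le_k unfolding n_def by (simp_all add: of_nat_diff)
  have \<delta>: "n / 3 \<le> \<delta>" "n / 6 \<le> real \<delta> - 1" "3 * \<epsilon> * n / 2 \<le> (3 * real \<delta> - n) / 2"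
    using assms(5) \<open>12 * real k \<le> n\<close> three_le_k \<open>0 \<le> \<epsilon> * n\<close> unfolding n_def by (auto simp: algebra_simps)
  have "k \<le> card A" "k \<le> card B" "1 \<le> \<delta>" "card V \<le> 3 * \<delta>"
    using A B \<delta> \<open>12 * real k \<le> n\<close> three_le_k \<open>0 \<le> \<epsilon> * n\<close> unfolding n_def by linarith+
  have "\<epsilon> / 15552 * n ^ 7 * (card V choose (k - 3))
      = (card V choose (k - 3))
        * (n / 12 * (n / 12 * (n / 3 * (n / 3 * (n / 6 * (n / 3 * (3 * \<epsilon> * n / 2)))))))"
    by (simp add: power_numeral_reduce)
  also have "\<dots> \<le> (card V choose (k - 3)) * ((card A - real (k - 3)) * ((card B - real (k - 3)) *
      (\<delta> * (real \<delta> * ((real \<delta> - 1) * (real \<delta> * ((3 * real \<delta> - n) / 2)))))))"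
    using A B \<delta> \<open>0 \<le> n\<close> \<open>0 \<le> \<epsilon> * n\<close> by (intro mult_left_mono mult_mono) auto
  also have "\<dots> \<le> card configs"
    unfolding n_def by (rule card_configs_ge) fact+
  finally show ?thesis
    unfolding n_def .
qed

lemma card_mixed_quints_le_power:
  fixes \<gamma> :: real
  assumes cross: "real (card (cross_nbrs V E A B (k - 1)))
      \<le> 2 * \<gamma> * card A * card B * (card V choose (k - 1))"
    and "0 \<le> \<gamma>"
  shows "real (card mixed_quints) \<le> 4 * (k - 1) ^ 2 * \<gamma> * real (card V) ^ 4 * (card V choose (k - 3))"
proof -
  define n where "n = real (card V)"
  have "real (card A) \<le> n" "real (card B) \<le> n"
    unfolding n_def using finite_V parts_subset by (simp_all add: card_mono)
  have "k - 1 = k - 3 + 2"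
    using three_le_k by simp
  then have "card V choose (k - 1) \<le> card V ^ 2 * (card V choose (k - 3))"
    by (simp only: binomial_add2_le)
  then have C_le: "real (card V choose (k - 1)) \<le> n ^ 2 * (card V choose (k - 3))"
    unfolding n_def by (metis of_nat_le_iff of_nat_mult of_nat_power)
  have "real (card mixed_quints) \<le> 2 * (k - 1) ^ 2 * real (card (cross_nbrs V E A B (k - 1)))"
    using card_mixed_quints_le by (metis of_nat_le_iff of_nat_mult of_nat_numeral of_nat_power)
  also have "\<dots> \<le> 2 * (k - 1) ^ 2 * (2 * \<gamma> * card A * card B * (card V choose (k - 1)))"
    using cross by (intro mult_left_mono) auto
  also have "\<dots> \<le> 2 * (k - 1) ^ 2 * (2 * \<gamma> * n * n * (n ^ 2 * (card V choose (k - 3))))"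
    using \<open>real (card A) \<le> n\<close> \<open>real (card B) \<le> n\<close> C_le \<open>0 \<le> \<gamma>\<close>
    by (intro mult_left_mono mult_mono) auto
  also have "\<dots> = 4 * (k - 1) ^ 2 * \<gamma> * n ^ 4 * (card V choose (k - 3))"
    by (simp add: power_numeral_reduce)
  finally show ?thesis
    unfolding n_def .
qed

lemma card_proto_balancers_ge_binomial:
  fixes \<gamma> \<epsilon> :: real
  assumes cross: "real (card (cross_nbrs V E A B (k - 1)))
      \<le> 2 * \<gamma> * card A * card B * (card V choose (k - 1))"
    and "0 \<le> \<gamma>" and \<gamma>_small: "746496 * (k - 1) ^ 2 * \<gamma> \<le> \<epsilon>"
    and "real (card V) / 6 < card A" "real (card V) / 6 < card B" and "12 * k \<le> card V"
    and "0 \<le> \<epsilon>" and "(1 / 3 + \<epsilon>) * card V \<le> \<delta>"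
  shows "\<epsilon> / 31104 * real (card V) ^ 7 * (card V choose (k - 3))
    \<le> real (2 ^ (k + 2) * (k + 2) ^ 5) * real (card V) ^ 2
      * card (proto_balancers k V E A \<union> proto_balancers k V E B)"
proof -
  define n where "n = real (card V)"
  define Cb where "Cb = real (card V choose (k - 3))"
  have "6 * n ^ 3 * card mixed_quints \<le> 6 * n ^ 3 * (4 * (k - 1) ^ 2 * \<gamma> * n ^ 4 * Cb)"
    using card_mixed_quints_le_power[OF cross \<open>0 \<le> \<gamma>\<close>] unfolding n_def Cb_def
    by (intro mult_left_mono) auto
  also have "\<dots> = 746496 * (k - 1) ^ 2 * \<gamma> / 31104 * n ^ 7 * Cb"
    by (simp add: power_numeral_reduce)
  also have "\<dots> \<le> \<epsilon> / 31104 * n ^ 7 * Cb"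
    using \<gamma>_small unfolding n_def Cb_def by (intro mult_right_mono) (auto simp: mult_ac)
  finally have mixed: "6 * n ^ 3 * card mixed_quints \<le> \<epsilon> / 31104 * n ^ 7 * Cb" .
  have "real (card configs) \<le> real (2 ^ (k + 2) * (k + 2) ^ 5 * card V ^ 2
      * card (proto_balancers k V E A \<union> proto_balancers k V E B) + 6 * card V ^ 3 * card mixed_quints)"
    using card_configs_le by (simp only: of_nat_le_iff)
  moreover have "\<epsilon> / 15552 * n ^ 7 * Cb \<le> card configs"
    using card_configs_ge_power assms(4-8) unfolding n_def Cb_def by simp
  ultimately show ?thesis
    using mixed unfolding n_def Cb_def by simp
qed

end

section \<open>Counting proto-balancers\<close>

(* 1/72 < 1/36 makes both parts of the separation large; with 746496 = 24 * 31104 the unbalanced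
   configurations are at most half of the eps n^7 binom(n, k-3) / 15552 configurations. *)
definition gamma_bound :: "nat \<Rightarrow> real \<Rightarrow> real" where
  "gamma_bound k \<epsilon> = min (1 / 72) (\<epsilon> / (746496 * real (k - 1) ^ 2))"

definition balancer_density :: "nat \<Rightarrow> real \<Rightarrow> real" where
  "balancer_density k \<epsilon> = \<epsilon> / (31104 * real (2 ^ (k + 2) * (k + 2) ^ 5) * real ((k - 3) ^ (k - 3)))"

lemma gamma_bound_pos: "3 \<le> k \<Longrightarrow> 0 < \<epsilon> \<Longrightarrow> 0 < gamma_bound k \<epsilon>"
  unfolding gamma_bound_def by simp

lemma balancer_density_pos: "3 \<le> k \<Longrightarrow> 0 < \<epsilon> \<Longrightarrow> 0 < balancer_density k \<epsilon>"
  unfolding balancer_density_def by (cases "k = 3") (auto intro!: divide_pos_pos)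

lemma balancer_density_mult_power_le:
  assumes "3 \<le> k" and "k \<le> N" and "0 < \<epsilon>"
    and key: "\<epsilon> / 31104 * real N ^ 7 * (N choose (k - 3))
      \<le> real (2 ^ (k + 2) * (k + 2) ^ 5) * real N ^ 2 * P"
  shows "balancer_density k \<epsilon> * real N ^ (k + 2) \<le> P"
proof -
  define n where "n = real N"
  define K where "K = real (2 ^ (k + 2) * (k + 2) ^ 5)"
  define M where "M = real ((k - 3) ^ (k - 3))"
  have "0 < n" "0 < K" "0 < M"
    using assms(1,2) unfolding n_def K_def M_def by (cases "k = 3") auto
  have "(n / real (k - 3)) ^ (k - 3) \<le> real (N choose (k - 3))"
    unfolding n_def using \<open>k \<le> N\<close> by (intro binomial_ge_n_over_k_pow_k) simp
  then have binomial_ge: "n ^ (k - 3) / M \<le> real (N choose (k - 3))"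
    unfolding M_def by (simp add: power_divide)
  have "k + 2 + 2 = 7 + (k - 3)"
    using \<open>3 \<le> k\<close> by simp
  then have power_shift: "n ^ (k + 2) * n ^ 2 = n ^ 7 * n ^ (k - 3)"
    by (simp only: power_add[symmetric])
  have "balancer_density k \<epsilon> * n ^ (k + 2) * (K * n ^ 2) = \<epsilon> / (31104 * K * M) * (n ^ (k + 2) * n ^ 2) * K"
    unfolding balancer_density_def K_def M_def by (simp only: mult_ac)
  also have "\<dots> = \<epsilon> / 31104 * n ^ 7 * (n ^ (k - 3) / M)"
    unfolding power_shift using \<open>0 < K\<close> by (simp add: field_simps)
  also have "\<dots> \<le> \<epsilon> / 31104 * n ^ 7 * (N choose (k - 3))"
    using binomial_ge \<open>0 < \<epsilon>\<close> \<open>0 < n\<close> by (intro mult_left_mono) auto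
  also have "\<dots> \<le> P * (K * n ^ 2)"
    using key unfolding n_def K_def by (simp add: mult_ac)
  finally have "balancer_density k \<epsilon> * n ^ (k + 2) * (K * n ^ 2) \<le> P * (K * n ^ 2)" .
  then show ?thesis
    using \<open>0 < K\<close> \<open>0 < n\<close> unfolding n_def by (simp add: mult_le_cancel_right_pos)
qed

lemma card_proto_balancers_ge:
  fixes V :: "'a set"
  assumes kg: "kgraph k V E" and "3 \<le> k" and "12 * k \<le> card V" and "0 < \<epsilon>"
    and min_codegree_ge: "(1 / 3 + \<epsilon>) * card V \<le> min_codegree k V E"
    and sep: "mu_separation k \<gamma> \<mu> V E A B" and "\<mu> \<le> \<gamma>" and "\<gamma> \<le> gamma_bound k \<epsilon>"
  shows "balancer_density k \<epsilon> * real (card V) ^ (k + 2)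
    \<le> card (proto_balancers k V E A \<union> proto_balancers k V E B)"
proof -
  have "\<gamma> < 1 / 36" and \<gamma>_small: "746496 * (k - 1) ^ 2 * \<gamma> \<le> \<epsilon>"
    using \<open>\<gamma> \<le> gamma_bound k \<epsilon>\<close> \<open>3 \<le> k\<close> unfolding gamma_bound_def by (auto simp: field_simps)
  have sep_parts: "A \<noteq> {}" "B \<noteq> {}" "A \<union> B = V" "A \<inter> B = {}"
    using sep unfolding mu_separation_def by auto
  interpret codegree_bipartition k V E A B "min_codegree k V E"
    using kg \<open>3 \<le> k\<close> sep_parts min_codegree_le_card_nbhd[OF kg] by unfold_locales auto
  interpret swapped: codegree_bipartition k V E B A "min_codegree k V E"
    using kg \<open>3 \<le> k\<close> sep_parts min_codegree_le_card_nbhd[OF kg] by unfold_locales auto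
  have cross: "real (card (cross_nbrs V E A B (k - 1)))
      \<le> 2 * \<gamma> * card A * card B * (card V choose (k - 1))"
    using card_cross_nbrs_le[OF kg _ sep \<open>\<mu> \<le> \<gamma>\<close>] \<open>3 \<le> k\<close> by simp
  have "0 \<le> \<gamma>"
    using mu_separation_pos[OF sep finite_V] \<open>\<mu> \<le> \<gamma>\<close> by simp
  have "0 \<le> \<epsilon> * card V"
    using \<open>0 < \<epsilon>\<close> by simp
  then have codegree_large: "real (card V) \<le> 3 * min_codegree k V E"
    using min_codegree_ge by (simp add: algebra_simps)
  have "k \<le> card V"
    using \<open>12 * k \<le> card V\<close> by simp
  have "real (card V) / 6 < card A"
    using card_part_gt_sixth[OF cross \<open>0 \<le> \<gamma>\<close> \<open>\<gamma> < 1 / 36\<close> codegree_large \<open>k \<le> card V\<close>] sep_parts(1) .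
  moreover have "real (card V) / 6 < card B"
  proof (rule swapped.card_part_gt_sixth)
    show "real (card (cross_nbrs V E B A (k - 1))) \<le> 2 * \<gamma> * card B * card A * (card V choose (k - 1))"
      using cross by (simp add: card_cross_nbrs_swap mult_ac)
  qed (use \<open>0 \<le> \<gamma>\<close> \<open>\<gamma> < 1 / 36\<close> codegree_large \<open>k \<le> card V\<close> sep_parts(2) in auto)
  ultimately show ?thesis
    using card_proto_balancers_ge_binomial[OF cross \<open>0 \<le> \<gamma>\<close> \<gamma>_small] \<open>12 * k \<le> card V\<close>
      \<open>0 < \<epsilon>\<close> min_codegree_ge \<open>3 \<le> k\<close>
    by (intro balancer_density_mult_power_le) auto
qed

theorem lemma7p5:
  "\<forall>k::nat. k \<ge> 3 \<longrightarrow> (\<forall>\<epsilon>::real. \<epsilon> > 0 \<longrightarrow>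
     (\<exists>\<gamma>0::real. \<gamma>0 > 0 \<and> (\<exists>\<rho>::real. \<rho> > 0 \<and>
       (\<forall>\<mu> \<gamma>::real. 0 < \<mu> \<and> \<mu> \<le> \<gamma> \<and> \<gamma> \<le> \<gamma>0 \<longrightarrow>
         (\<exists>n0::nat. \<forall>n \<ge> n0. \<forall>(V::'a set) E A B.
            kgraph k V E \<and> card V = n \<and>
            real (min_codegree k V E) \<ge> (1/3 + \<epsilon>) * real n \<and>
            mu_separation k \<gamma> \<mu> V E A B \<longrightarrow>
            real (card (proto_balancers k V E A \<union> proto_balancers k V E B))
              \<ge> \<rho> * real n ^ (k + 2))))))"
  apply (intro allI impI)
  subgoal for k \<epsilon>
    using gamma_bound_pos[of k \<epsilon>] balancer_density_pos[of k \<epsilon>] card_proto_balancers_ge[of k _ _ \<epsilon>]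
    by (intro exI[of _ "gamma_bound k \<epsilon>"] exI[of _ "balancer_density k \<epsilon>"] conjI allI impI
        exI[of _ "12 * k"]) auto
  done

end
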